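(* Let $m\ge 1$ and $k\ge 1$ be integers with $\gcd(k,\tau(m))=1$. Then $\sigma(m)$ divides $\sigma_k(m)$. In particular, if $m$ is multiperfect (i.e. $m\mid\sigma(m)$), then $m\mid\sigma_k(m)$ for every $k\ge 1$ coprime to $\tau(m)$. Consequently, if $m$ is multiperfect and $\tau(m)$ is a power of $2$, then $m\mid\sigma_k(m)$ for every odd $k\ge 1$.
   Context: For integers $k\ge 0$ and $n\ge 1$, $\sigma_k(n)=\sum_{d\mid n} d^k$, and $\sigma=\sigma_1$. $\tau(n)=\sigma_0(n)$ is the number of positive divisors of $n$. *)

theory Defs
  imports Main
begin

text \<open>sigma_k(n) = sum of d^k over positive divisors d of n (intended for n >= 1).\<close>
definition divisor_sigma :: "nat \<Rightarrow> nat \<Rightarrow> nat" where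
  "divisor_sigma k n = (\<Sum>d\<in>{d. d dvd n}. d ^ k)"

definition sigma :: "nat \<Rightarrow> nat" where
  "sigma n = divisor_sigma 1 n"

definition tau :: "nat \<Rightarrow> nat" where
  "tau n = divisor_sigma 0 n"

end

theory Submission
  imports Defs "HOL-Number_Theory.Number_Theory"
begin

text \<open>The divisor sums are multiplicative and \<open>\<tau>(m)\<close> factors accordingly, so it suffices
  to treat \<open>m = p^a\<close>. With \<open>n = a + 1 = \<tau>(p^a)\<close> we have \<open>\<sigma>(p^a) = \<Sum>i<n. p^i\<close> and
  \<open>\<sigma>\<^sub>k(p^a) = \<Sum>i<n. p^(i k)\<close>. Since \<open>\<sigma>(p^a)\<close> divides \<open>p^n - 1\<close>, we may reduce the exponent
  \<open>i k\<close> modulo \<open>n\<close>; as \<open>k\<close> is coprime to \<open>n\<close>, \<open>i \<mapsto> i k mod n\<close> permutes \<open>{0..<n}\<close>, so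
  \<open>\<sigma>\<^sub>k(p^a) \<equiv> \<sigma>(p^a) (mod \<sigma>(p^a))\<close>.\<close>

lemma bij_betw_mult_mod_lessThan:
  fixes n k :: nat
  assumes "n > 0" "coprime k n"
  shows "bij_betw (\<lambda>i. i * k mod n) {..<n} {..<n}"
proof -
  have inj: "inj_on (\<lambda>i. i * k mod n) {..<n}"
  proof (rule inj_onI)
    fix i j assume "i \<in> {..<n}" "j \<in> {..<n}" "i * k mod n = j * k mod n"
    then have "[i * k = j * k] (mod n)" by (simp add: cong_def)
    then have "[i = j] (mod n)" using cong_mult_rcancel_nat[OF assms(2)] by simp
    with \<open>i \<in> {..<n}\<close> \<open>j \<in> {..<n}\<close> show "i = j" by (simp add: cong_def)
  qed
  moreover have "(\<lambda>i. i * k mod n) ` {..<n} = {..<n}"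
    using assms(1) card_image[OF inj] by (intro card_subset_eq) auto
  ultimately show ?thesis by (simp add: bij_betw_def)
qed

lemma geometric_sum_dvd_geometric_sum_mult_exp:
  fixes x :: "'a :: comm_ring_1" and n k :: nat
  assumes "n > 0" "coprime k n"
  shows "(\<Sum>i<n. x ^ i) dvd (\<Sum>i<n. x ^ (i * k))"
proof -
  let ?S = "\<Sum>i<n. x ^ i"
  have S_reindex: "?S = (\<Sum>i<n. x ^ (i * k mod n))"
    using sum.reindex_bij_betw[OF bij_betw_mult_mod_lessThan[OF assms], of "power x"] by simp
  have S_dvd: "?S dvd x ^ n - 1"
    using power_diff_1_eq[of x n] by simp
  have "x ^ n - 1 dvd x ^ (i * k) - x ^ (i * k mod n)" for i
  proof -
    have "x ^ (i * k) = x ^ (i * k mod n) * (x ^ n) ^ (i * k div n)"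
      by (metis mod_div_mult_eq mult.commute power_add power_mult)
    then have "x ^ (i * k) - x ^ (i * k mod n) = x ^ (i * k mod n) * ((x ^ n) ^ (i * k div n) - 1)"
      by (simp add: algebra_simps)
    moreover have "x ^ n - 1 dvd (x ^ n) ^ (i * k div n) - 1"
      using power_diff_1_eq[of "x ^ n" "i * k div n"] by simp
    ultimately show ?thesis by simp
  qed
  then have "x ^ n - 1 dvd (\<Sum>i<n. x ^ (i * k)) - ?S"
    unfolding S_reindex sum_subtractf[symmetric] by (intro dvd_sum) auto
  then have "?S dvd (\<Sum>i<n. x ^ (i * k)) - ?S"
    using S_dvd dvd_trans by blast
  then have "?S dvd ((\<Sum>i<n. x ^ (i * k)) - ?S) + ?S"
    by (rule dvd_add) simp
  then show ?thesis by simp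
qed

lemma geometric_sum_dvd_geometric_sum_mult_exp_nat:
  fixes x n k :: nat
  assumes "n > 0" "coprime k n"
  shows "(\<Sum>i<n. x ^ i) dvd (\<Sum>i<n. x ^ (i * k))"
proof -
  have "(\<Sum>i<n. int x ^ i) dvd (\<Sum>i<n. int x ^ (i * k))"
    by (rule geometric_sum_dvd_geometric_sum_mult_exp[OF assms])
  then have "int (\<Sum>i<n. x ^ i) dvd int (\<Sum>i<n. x ^ (i * k))" by simp
  then show ?thesis by (simp only: int_dvd_int_iff)
qed

lemma divisor_sigma_prime_power:
  fixes p a k :: nat
  assumes "prime p"
  shows "divisor_sigma k (p ^ a) = (\<Sum>i<Suc a. p ^ (i * k))"
proof -
  have divisors: "{d. d dvd p ^ a} = power p ` {..<Suc a}"
    using divides_primepow_nat[OF assms] by (auto simp: less_Suc_eq_le)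
  have "inj_on (power p) {..<Suc a}"
    using prime_gt_1_nat[OF assms] by (auto simp: inj_on_def power_inject_exp)
  then show ?thesis
    unfolding divisor_sigma_def divisors by (simp add: sum.reindex power_mult mult.commute)
qed

lemma divisor_sigma_mult_coprime:
  fixes a b k :: nat
  assumes "coprime a b" "a > 0" "b > 0"
  shows "divisor_sigma k (a * b) = divisor_sigma k a * divisor_sigma k b"
proof -
  let ?D = "{d. d dvd a} \<times> {d. d dvd b}"
  have divisors: "{d. d dvd a * b} = (\<lambda>(x, y). x * y) ` ?D"
    by (auto dest: division_decomp intro: mult_dvd_mono)
  have "inj_on (\<lambda>(x, y). x * y) ?D"
  proof (rule inj_onI, clarify)
    fix x1 y1 x2 y2 :: nat
    assume h: "x1 dvd a" "y1 dvd b" "x2 dvd a" "y2 dvd b" "x1 * y1 = x2 * y2"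
    have "gcd (x * y) a = x" if "x dvd a" "y dvd b" for x y
      using gcd_mult_left_right_cancel[OF coprime_divisors[OF dvd_refl \<open>y dvd b\<close> assms(1)]]
        \<open>x dvd a\<close> by (simp add: gcd_nat.absorb1)
    then have "x1 = x2" using h by (metis (no_types))
    moreover have "x1 > 0" using h(1) assms(2) by (auto intro: gr0I)
    ultimately show "x1 = x2 \<and> y1 = y2" using h(5) by simp
  qed
  then have "divisor_sigma k (a * b) = (\<Sum>(x, y)\<in>?D. (x * y) ^ k)"
    unfolding divisor_sigma_def divisors by (simp add: sum.reindex case_prod_unfold)
  also have "\<dots> = (\<Sum>x\<in>{d. d dvd a}. \<Sum>y\<in>{d. d dvd b}. x ^ k * y ^ k)"
    by (simp add: sum.cartesian_product power_mult_distrib)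
  also have "\<dots> = divisor_sigma k a * divisor_sigma k b"
    unfolding divisor_sigma_def by (simp add: sum_product)
  finally show ?thesis .
qed

lemma tau_prime_power: "prime p \<Longrightarrow> tau (p ^ a) = Suc a"
  by (simp add: tau_def divisor_sigma_prime_power)

lemma tau_mult_coprime: "coprime a b \<Longrightarrow> a > 0 \<Longrightarrow> b > 0 \<Longrightarrow> tau (a * b) = tau a * tau b"
  by (simp add: tau_def divisor_sigma_mult_coprime)

lemma sigma_mult_coprime: "coprime a b \<Longrightarrow> a > 0 \<Longrightarrow> b > 0 \<Longrightarrow> sigma (a * b) = sigma a * sigma b"
  by (simp add: sigma_def divisor_sigma_mult_coprime)

lemma sigma_dvd_divisor_sigma_prime_power:
  assumes "prime p" "coprime k (tau (p ^ a))"
  shows "sigma (p ^ a) dvd divisor_sigma k (p ^ a)"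
  using geometric_sum_dvd_geometric_sum_mult_exp_nat[of "Suc a" k p] assms
  by (simp add: sigma_def divisor_sigma_prime_power tau_prime_power)

lemma split_prime_power_factor:
  fixes m :: nat
  assumes "m > 1"
  obtains p a r where "prime p" "a > 0" "r > 0" "r < m" "coprime (p ^ a) r" "m = p ^ a * r"
proof -
  obtain p where p: "prime p" "p dvd m"
    using assms prime_factor_nat by (metis less_irrefl)
  define a where "a = multiplicity p m"
  obtain r where r: "m = p ^ a * r" "\<not> p dvd r"
    using multiplicity_decompose'[of m p] assms p(1) not_prime_unit unfolding a_def
    by (metis not_one_less_zero)
  have "a > 0" using p assms unfolding a_def
    by (metis multiplicity_gt_zero_iff not_one_less_zero not_prime_unit)
  then have "p ^ a > 1" using prime_gt_1_nat[OF p(1)] by (metis one_less_power)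
  moreover have "r > 0" using r(1) assms by (auto intro: gr0I)
  ultimately have "r < m" using r(1) by simp
  moreover have "coprime (p ^ a) r"
    using p(1) r(2) by (simp add: prime_imp_coprime coprime_power_left_iff)
  ultimately show thesis using that p(1) \<open>a > 0\<close> \<open>r > 0\<close> r(1) by blast
qed

lemma sigma_dvd_divisor_sigma:
  fixes m k :: nat
  assumes "m > 0" "coprime k (tau m)"
  shows "sigma m dvd divisor_sigma k m"
  using assms
proof (induction m rule: less_induct)
  case (less m)
  show ?case
  proof (cases "m = 1")
    case True
    then show ?thesis by (simp add: sigma_def divisor_sigma_def)
  next
    case False
    with less.prems(1) have "m > 1" by simp
    then obtain p a r where
      pr: "prime p" "a > 0" "r > 0" "r < m" "coprime (p ^ a) r" and m: "m = p ^ a * r"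
      by (rule split_prime_power_factor)
    have pa: "p ^ a > 0" using prime_gt_0_nat[OF pr(1)] by simp
    have "coprime k (tau (p ^ a))" "coprime k (tau r)"
      using less.prems(2) unfolding m tau_mult_coprime[OF pr(5) pa pr(3)] by simp_all
    then have "sigma (p ^ a) * sigma r dvd divisor_sigma k (p ^ a) * divisor_sigma k r"
      using sigma_dvd_divisor_sigma_prime_power[OF pr(1)] less.IH[OF pr(4,3)] by (intro mult_dvd_mono)
    then show ?thesis
      unfolding m sigma_mult_coprime[OF pr(5) pa pr(3)] divisor_sigma_mult_coprime[OF pr(5) pa pr(3)] .
  qed
qed

theorem mainTheorem5:
  shows "(\<forall>m k::nat. m \<ge> 1 \<longrightarrow> k \<ge> 1 \<longrightarrow> coprime k (tau m)
            \<longrightarrow> sigma m dvd divisor_sigma k m)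
       \<and> (\<forall>m k::nat. m \<ge> 1 \<longrightarrow> m dvd sigma m \<longrightarrow> k \<ge> 1 \<longrightarrow> coprime k (tau m)
            \<longrightarrow> m dvd divisor_sigma k m)
       \<and> (\<forall>m k::nat. m \<ge> 1 \<longrightarrow> m dvd sigma m \<longrightarrow> (\<exists>j. tau m = 2 ^ j)
            \<longrightarrow> k \<ge> 1 \<longrightarrow> odd k \<longrightarrow> m dvd divisor_sigma k m)"
proof (intro conjI allI impI)
  fix m k :: nat
  assume "m \<ge> 1" "coprime k (tau m)"
  then show "sigma m dvd divisor_sigma k m" by (simp add: sigma_dvd_divisor_sigma)
next
  fix m k :: nat
  assume "m \<ge> 1" "m dvd sigma m" "coprime k (tau m)"
  then show "m dvd divisor_sigma k m"
    using sigma_dvd_divisor_sigma[of m k] dvd_trans by simp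
next
  fix m k :: nat
  assume "m \<ge> 1" "m dvd sigma m" "\<exists>j. tau m = 2 ^ j" "odd k"
  then obtain j where "tau m = 2 ^ j" by blast
  with \<open>odd k\<close> have "coprime k (tau m)" by (simp add: coprime_power_right_iff)
  with \<open>m \<ge> 1\<close> \<open>m dvd sigma m\<close> show "m dvd divisor_sigma k m"
    using sigma_dvd_divisor_sigma[of m k] dvd_trans by simp
qed

end
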